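(* For every integer $n\ge2$, $$\mathfrak{C}_n(x)=2x^2\,\mathfrak{C}_{n-2}(x)+\left(\frac x4+4x^3\right)\mathfrak{C}'_{n-2}(x)+\left(\frac{x^2}4+x^4\right)\mathfrak{C}''_{n-2}(x),$$ where primes denote derivatives with respect to $x$.
   Context: For $n\ge1$ the central factorial is $x^{[n]}=x\,(x+\tfrac n2-1)(x+\tfrac n2-2)\cdots(x-\tfrac n2+1)$ (a product of $n$ factors), and $x^{[0]}=1$. The central factorial numbers of the second kind $T(n,k)$ ($0\le k\le n$) are defined by $x^n=\sum_{k=0}^n T(n,k)\,x^{[k]}$; equivalently $T(n,k)=\frac1{k!}\sum_{j=0}^k(-1)^j\binom kj\left(\frac k2-j\right)^n$, and $T(n,k)=0$ for $k>n$. The $n$th central Fubini-like polynomial is $\mathfrak{C}_n(x)=\sum_{k=0}^n k!\,T(n,k)\,x^k$. *)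

theory Defs
  imports "HOL-Computational_Algebra.Polynomial"
begin

definition central_fact_T :: "nat \<Rightarrow> nat \<Rightarrow> real" where
  "central_fact_T n k =
     (if k > n then 0
      else (1 / fact k) * (\<Sum>j\<le>k. (-1) ^ j * real (k choose j) * (real k / 2 - real j) ^ n))"

definition central_fubini :: "nat \<Rightarrow> real poly" where
  "central_fubini n = (\<Sum>k\<le>n. monom (fact k * central_fact_T n k) k)"

end

theory Submission
  imports Defs
begin

text \<open>The coefficient of \<open>x\<^sup>k\<close> in \<open>C\<^sub>n\<close> is \<open>k! T(n,k)\<close>, the \<open>k\<close>-th central
  difference of \<open>x\<^sup>n\<close> at \<open>0\<close> (\<open>central_diff_pow n k\<close> below).
  Writing \<open>(k/2 - j)\<^sup>2 = k\<^sup>2/4 - j(k - j)\<close> in the alternating sum and absorbing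
  \<open>j (k - j)\<close> into the binomial coefficient gives the recurrence
  \<open>k! T(n+2,k) = k\<^sup>2/4 \<cdot> k! T(n,k) + k(k-1) \<cdot> (k-2)! T(n,k-2)\<close>,
  and this is exactly the coefficientwise form of the differential operator
  \<open>2x\<^sup>2 + (x/4 + 4x\<^sup>3) d/dx + (x\<^sup>2/4 + x\<^sup>4) d\<^sup>2/dx\<^sup>2\<close>.\<close>

definition central_diff_pow :: "nat \<Rightarrow> nat \<Rightarrow> real" where
  "central_diff_pow n k = (\<Sum>j\<le>k. (-1) ^ j * real (k choose j) * (real k / 2 - real j) ^ n)"

lemma Suc_Suc_choose_Suc_mult:
  "(Suc (Suc m) choose Suc i) * Suc i * (Suc m - i) = Suc (Suc m) * Suc m * (m choose i)"
proof -
  have "Suc i * (Suc (Suc m) choose Suc i) = Suc (Suc m) * (Suc m choose i)"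
    by (rule Suc_times_binomial)
  moreover have "(Suc m - i) * (Suc m choose i) = Suc m * (m choose i)"
    using binomial_absorb_comp[of "Suc m" i] by simp
  ultimately show ?thesis
    by (metis mult.assoc mult.commute)
qed

lemma central_diff_pow_Suc_Suc_diff:
  "central_diff_pow (n + 2) k - real k ^ 2 / 4 * central_diff_pow n k
     = - (\<Sum>j\<le>k. (-1) ^ j * real (k choose j) * (real j * (real k - real j))
                   * (real k / 2 - real j) ^ n)"
proof -
  have square: "(real k / 2 - real j) ^ (n + 2)
          = (real k ^ 2 / 4 - real j * (real k - real j)) * (real k / 2 - real j) ^ n" for j
    by (simp add: power_add power2_eq_square field_simps)
  show ?thesis
    unfolding central_diff_pow_def sum_distrib_left sum_negf[symmetric]
      sum_subtractf[symmetric] square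
    by (intro sum.cong) (simp_all only: algebra_simps)
qed

lemma central_diff_pow_Suc_Suc:
  "central_diff_pow (n + 2) k
     = real k ^ 2 / 4 * central_diff_pow n k + real k * (real k - 1) * central_diff_pow n (k - 2)"
proof (cases "k < 2")
  case True
  then have "k = 0 \<or> k = 1" by auto
  then show ?thesis
    using central_diff_pow_Suc_Suc_diff[of n k] by auto
next
  case False
  then obtain m where k: "k = Suc (Suc m)"
    by (metis add_2_eq_Suc le_Suc_ex not_less)
  have absorb: "real (k choose Suc i) * (real (Suc i) * (real k - real (Suc i)))
                  = real k * (real k - 1) * real (m choose i)" if "i \<le> Suc m" for i
  proof -
    have "real (k choose Suc i) * real (Suc i) * real (Suc m - i)
            = real k * real (Suc m) * real (m choose i)"
      using arg_cong[OF Suc_Suc_choose_Suc_mult[of m i], of real] unfolding k of_nat_mult .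
    with that show ?thesis
      unfolding k by (simp add: of_nat_diff algebra_simps)
  qed
  have shift: "real k / 2 - real (Suc i) = real m / 2 - real i" for i
    unfolding k by (simp add: field_simps)
  have "(\<Sum>j\<le>k. (-1) ^ j * real (k choose j) * (real j * (real k - real j))
                  * (real k / 2 - real j) ^ n)
        = (\<Sum>i\<le>Suc m. (-1) ^ Suc i * real (k choose Suc i) * (real (Suc i) * (real k - real (Suc i)))
                  * (real k / 2 - real (Suc i)) ^ n)"
    unfolding k by (subst sum.atMost_Suc_shift) simp
  also have "\<dots> = - (real k * (real k - 1)
                   * (\<Sum>i\<le>Suc m. (-1) ^ i * real (m choose i) * (real m / 2 - real i) ^ n))"
    unfolding sum_distrib_left sum_negf[symmetric]
  proof (intro sum.cong refl)
    fix i assume "i \<in> {..Suc m}"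
    then have "(-1) ^ Suc i * (real (k choose Suc i) * (real (Suc i) * (real k - real (Suc i))))
                 = - (real k * (real k - 1) * ((-1) ^ i * real (m choose i)))"
      using absorb by simp
    then show "(-1) ^ Suc i * real (k choose Suc i) * (real (Suc i) * (real k - real (Suc i)))
                 * (real k / 2 - real (Suc i)) ^ n
               = - (real k * (real k - 1) * ((-1) ^ i * real (m choose i) * (real m / 2 - real i) ^ n))"
      unfolding shift by (metis (no_types, lifting) mult.assoc mult_minus_left)
  qed
  also have "\<dots> = - (real k * (real k - 1) * central_diff_pow n m)"
    by (simp add: central_diff_pow_def)
  finally show ?thesis
    using central_diff_pow_Suc_Suc_diff[of n k] k by simp
qed

lemma central_diff_pow_eq_0:
  assumes "n < k"
  shows "central_diff_pow n k = 0"
  using assms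
proof (induction n arbitrary: k rule: nat_less_induct)
  case (1 n)
  consider "n = 0" | "n = 1" | m where "n = m + 2"
    by (metis One_nat_def add_2_eq_Suc' not0_implies_Suc)
  then show ?case
  proof cases
    case 1
    with "1.prems" show ?thesis
      by (simp add: central_diff_pow_def choose_alternating_sum)
  next
    case 2
    have "central_diff_pow n k = real k / 2 * (\<Sum>j\<le>k. (-1) ^ j * real (k choose j))
                                  - (\<Sum>j\<le>k. (-1) ^ j * real j * real (k choose j))"
      unfolding central_diff_pow_def 2 sum_distrib_left sum_subtractf[symmetric]
      by (rule sum.cong) (auto simp: algebra_simps)
    with "1.prems" 2 show ?thesis
      by (simp add: choose_alternating_sum choose_alternating_linear_sum)
  next
    case 3
    with "1.prems" have "m < n" "m < k" "m < k - 2" by auto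
    with "1.IH" have "central_diff_pow m k = 0" "central_diff_pow m (k - 2) = 0"
      by blast+
    then show ?thesis
      unfolding 3 central_diff_pow_Suc_Suc by simp
  qed
qed

lemma coeff_central_fubini: "coeff (central_fubini n) k = central_diff_pow n k"
proof -
  have "coeff (central_fubini n) k = (\<Sum>i\<le>n. if i = k then fact i * central_fact_T n i else 0)"
    unfolding central_fubini_def coeff_sum coeff_monom by (rule sum.cong) auto
  also have "\<dots> = (if k \<le> n then fact k * central_fact_T n k else 0)"
    by (simp add: sum.delta)
  also have "\<dots> = central_diff_pow n k"
    using central_diff_pow_eq_0[of n k] by (auto simp: central_fact_T_def central_diff_pow_def)
  finally show ?thesis .
qed

lemma coeff_central_fubini_operator:
  fixes p :: "'a::field_char_0 poly"
  shows "coeff (smult 2 (monom 1 2) * p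
                + (smult (1/4) (monom 1 1) + smult 4 (monom 1 3)) * pderiv p
                + (smult (1/4) (monom 1 2) + monom 1 4) * pderiv (pderiv p)) k
         = of_nat k ^ 2 / 4 * coeff p k + of_nat k * (of_nat k - 1) * coeff p (k - 2)"
proof -
  consider "k < 4" | j where "k = j + 4"
    by (metis add.commute le_add_diff_inverse not_less)
  then show ?thesis
  proof cases
    case 1
    then show ?thesis
      by (simp add: smult_monom distrib_right coeff_monom_mult coeff_pderiv numeral_eq_Suc
                    less_Suc_eq, elim disjE; simp add: field_simps)
  next
    case 2
    then show ?thesis
      by (simp add: smult_monom distrib_right coeff_monom_mult coeff_pderiv numeral_eq_Suc,
          simp add: field_simps)
  qed
qed

theorem theorem6:
  fixes n :: nat
  assumes "n \<ge> 2"
  shows "central_fubini n =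
           smult 2 (monom 1 2) * central_fubini (n - 2)
         + (smult (1/4) (monom 1 1) + smult 4 (monom 1 3)) * pderiv (central_fubini (n - 2))
         + (smult (1/4) (monom 1 2) + monom 1 4) * pderiv (pderiv (central_fubini (n - 2)))"
proof (rule poly_eqI)
  fix k
  define m where "m = n - 2"
  with assms have n: "n = m + 2" by simp
  show "coeff (central_fubini n) k = coeff (smult 2 (monom 1 2) * central_fubini (n - 2)
         + (smult (1/4) (monom 1 1) + smult 4 (monom 1 3)) * pderiv (central_fubini (n - 2))
         + (smult (1/4) (monom 1 2) + monom 1 4) * pderiv (pderiv (central_fubini (n - 2)))) k"
    unfolding coeff_central_fubini_operator coeff_central_fubini n central_diff_pow_Suc_Suc
    by simp
qed

end
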